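(* Let $0\le\alpha<1$ and let $G$ be a graph on $n$ vertices with minimum degree $\delta\ge 1$. Let $\mathbf{x}=(x_1,\dots,x_n)$ be a non-negative unit eigenvector of $A_\alpha(G)$ corresponding to $\lambda_\alpha(G)$ and $x=\min\{x_1,\dots,x_n\}$. Then $$x^2 \leq \frac{\delta (1-\alpha)^2}{(\lambda_{\alpha}(G)-\alpha \delta)^2+\delta(n-\delta) (1-\alpha)^2}.$$
   Context: $A_\alpha(G)=\alpha D(G)+(1-\alpha)A(G)$, where $A(G)$ is the adjacency matrix and $D(G)$ the diagonal degree matrix; $\lambda_\alpha(G)$ is its largest eigenvalue. *)

theory Defs
  imports Complex_Main
begin

definition simple_graph :: "nat \<Rightarrow> (nat \<Rightarrow> nat \<Rightarrow> bool) \<Rightarrow> bool" where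
  "simple_graph n E \<longleftrightarrow> (\<forall>i<n. \<forall>j<n. E i j \<longleftrightarrow> E j i) \<and> (\<forall>i<n. \<not> E i i)"

definition degree :: "nat \<Rightarrow> (nat \<Rightarrow> nat \<Rightarrow> bool) \<Rightarrow> nat \<Rightarrow> nat" where
  "degree n E i = card {j. j < n \<and> E i j}"

definition min_degree :: "nat \<Rightarrow> (nat \<Rightarrow> nat \<Rightarrow> bool) \<Rightarrow> nat" where
  "min_degree n E = Min (degree n E ` {..<n})"

definition adj_mat :: "(nat \<Rightarrow> nat \<Rightarrow> bool) \<Rightarrow> nat \<Rightarrow> nat \<Rightarrow> real" where
  "adj_mat E i j = (if E i j then 1 else 0)"

definition deg_mat :: "nat \<Rightarrow> (nat \<Rightarrow> nat \<Rightarrow> bool) \<Rightarrow> nat \<Rightarrow> nat \<Rightarrow> real" where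
  "deg_mat n E i j = (if i = j then real (degree n E i) else 0)"

definition A_alpha :: "real \<Rightarrow> nat \<Rightarrow> (nat \<Rightarrow> nat \<Rightarrow> bool) \<Rightarrow> nat \<Rightarrow> nat \<Rightarrow> real" where
  "A_alpha \<alpha> n E i j = \<alpha> * deg_mat n E i j + (1 - \<alpha>) * adj_mat E i j"

definition is_eigenpair :: "nat \<Rightarrow> (nat \<Rightarrow> nat \<Rightarrow> real) \<Rightarrow> real \<Rightarrow> (nat \<Rightarrow> real) \<Rightarrow> bool" where
  "is_eigenpair n M \<mu> v \<longleftrightarrow> (\<exists>i<n. v i \<noteq> 0) \<and> (\<forall>i<n. (\<Sum>j<n. M i j * v j) = \<mu> * v i)"

definition is_eigenvalue :: "nat \<Rightarrow> (nat \<Rightarrow> nat \<Rightarrow> real) \<Rightarrow> real \<Rightarrow> bool" where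
  "is_eigenvalue n M \<mu> \<longleftrightarrow> (\<exists>v. is_eigenpair n M \<mu> v)"

text \<open>Largest (real) eigenvalue; A_alpha is real symmetric, so all eigenvalues are real.\<close>
definition largest_eigenvalue :: "nat \<Rightarrow> (nat \<Rightarrow> nat \<Rightarrow> real) \<Rightarrow> real" where
  "largest_eigenvalue n M = Max {\<mu>. is_eigenvalue n M \<mu>}"

definition lambda_alpha :: "real \<Rightarrow> nat \<Rightarrow> (nat \<Rightarrow> nat \<Rightarrow> bool) \<Rightarrow> real" where
  "lambda_alpha \<alpha> n E = largest_eigenvalue n (A_alpha \<alpha> n E)"

end

theory Submission
  imports Defs "HOL-Analysis.Convex"
begin

text \<open>Pick a vertex u of minimum degree d. Its row of the eigen-equation reads
  (\<lambda> - \<alpha> d) x_u = (1 - \<alpha>) \<Sum>_{v \<sim> u} x_v, so by Cauchy-Schwarz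
  (\<lambda> - \<alpha> d)^2 x_u^2 \<le> d (1 - \<alpha>)^2 \<Sum>_{v \<sim> u} x_v^2. The n - d coordinates
  outside the neighbourhood of u are at least the minimum x, so the unit norm gives
  \<Sum>_{v \<sim> u} x_v^2 \<le> 1 - (n - d) x^2; together with x \<le> x_u this rearranges to the bound.\<close>

definition neighbours :: "nat \<Rightarrow> (nat \<Rightarrow> nat \<Rightarrow> bool) \<Rightarrow> nat \<Rightarrow> nat set" where
  "neighbours n E i = {j. j < n \<and> E i j}"

lemma neighbours_subset: "neighbours n E i \<subseteq> {..<n}"
  by (auto simp: neighbours_def)

lemma finite_neighbours: "finite (neighbours n E i)"
  by (simp add: neighbours_def)

lemma card_neighbours: "card (neighbours n E i) = degree n E i"
  by (simp add: neighbours_def degree_def)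

lemma degree_less_card_vertices:
  assumes "simple_graph n E" and "i < n"
  shows "degree n E i < n"
proof -
  have "i \<notin> neighbours n E i"
    using assms by (simp add: simple_graph_def neighbours_def)
  then have "neighbours n E i \<subset> {..<n}"
    using neighbours_subset assms(2) by blast
  then show ?thesis
    by (metis card_lessThan card_neighbours finite_lessThan psubset_card_mono)
qed

lemma min_degree_attained:
  assumes "0 < n"
  obtains i where "i < n" and "degree n E i = min_degree n E"
proof -
  have "min_degree n E \<in> degree n E ` {..<n}"
    unfolding min_degree_def using assms by (intro Min_in) auto
  then show ?thesis using that by auto
qed

lemma A_alpha_row_mult:
  assumes "i < n"
  shows "(\<Sum>j<n. A_alpha \<alpha> n E i j * x j)
    = \<alpha> * real (degree n E i) * x i + (1 - \<alpha>) * sum x (neighbours n E i)"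
proof -
  have "(\<Sum>j<n. A_alpha \<alpha> n E i j * x j)
      = (\<Sum>j<n. if j = i then \<alpha> * real (degree n E i) * x j else 0)
        + (\<Sum>j<n. if E i j then (1 - \<alpha>) * x j else 0)"
    unfolding sum.distrib[symmetric] A_alpha_def deg_mat_def adj_mat_def
    by (intro sum.cong) (auto simp: algebra_simps)
  also have "\<dots> = \<alpha> * real (degree n E i) * x i + (1 - \<alpha>) * sum x (neighbours n E i)"
    using assms
    by (simp add: sum.If_cases neighbours_def lessThan_def Collect_conj_eq sum_distrib_left)
  finally show ?thesis .
qed

lemma eigenpair_A_alpha_neighbour_sum:
  assumes "is_eigenpair n (A_alpha \<alpha> n E) \<mu> x" and "i < n"
  shows "(\<mu> - \<alpha> * real (degree n E i)) * x i = (1 - \<alpha>) * sum x (neighbours n E i)"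
  using assms A_alpha_row_mult[OF assms(2), of \<alpha> E x]
  by (auto simp: is_eigenpair_def algebra_simps)

lemma min_sq_le_of_weighted_subset_sum:
  fixes x :: "'a \<Rightarrow> real"
  assumes "finite V" and "N \<subseteq> V" and "u \<in> V"
    and "0 \<le> m" and "\<forall>j\<in>V. m \<le> x j"
    and "(\<Sum>j\<in>V. (x j)\<^sup>2) = 1"
    and "L * x u = a * sum x N"
  shows "m\<^sup>2 * (L\<^sup>2 + real (card N) * real (card V - card N) * a\<^sup>2) \<le> real (card N) * a\<^sup>2"
proof -
  have "finite N" using assms(1,2) finite_subset by blast
  have "real (card V - card N) * m\<^sup>2 = (\<Sum>j\<in>V - N. m\<^sup>2)"
    using assms(1,2) \<open>finite N\<close> by (simp add: card_Diff_subset of_nat_diff card_mono)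
  also have "\<dots> \<le> (\<Sum>j\<in>V - N. (x j)\<^sup>2)"
    using assms(4,5) by (intro sum_mono power_mono) auto
  also have "\<dots> = 1 - (\<Sum>j\<in>N. (x j)\<^sup>2)"
    using assms(1,2,6) by (simp add: sum_diff)
  finally have outside: "(\<Sum>j\<in>N. (x j)\<^sup>2) \<le> 1 - real (card V - card N) * m\<^sup>2" by simp
  have "L\<^sup>2 * m\<^sup>2 \<le> L\<^sup>2 * (x u)\<^sup>2"
    using assms(3-5) by (intro mult_left_mono power_mono) auto
  also have "\<dots> = a\<^sup>2 * (sum x N)\<^sup>2"
    by (metis assms(7) power_mult_distrib)
  also have "\<dots> \<le> a\<^sup>2 * (real (card N) * (\<Sum>j\<in>N. (x j)\<^sup>2))"
    using sum_squared_le_sum_of_squares[of x N] by (intro mult_left_mono) (auto simp: mult.commute)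
  also have "\<dots> \<le> a\<^sup>2 * (real (card N) * (1 - real (card V - card N) * m\<^sup>2))"
    using outside by (intro mult_left_mono) auto
  finally show ?thesis by (simp add: algebra_simps)
qed

theorem lemma5p3:
  fixes \<alpha> :: real and n :: nat and E :: "nat \<Rightarrow> nat \<Rightarrow> bool" and x :: "nat \<Rightarrow> real"
  assumes "0 \<le> \<alpha>" and "\<alpha> < 1"
    and "simple_graph n E"
    and "0 < n"
    and "min_degree n E \<ge> 1"
    and "\<forall>i<n. x i \<ge> 0"
    and "(\<Sum>i<n. (x i)\<^sup>2) = 1"
    and "is_eigenpair n (A_alpha \<alpha> n E) (lambda_alpha \<alpha> n E) x"
  shows "(Min (x ` {..<n}))\<^sup>2 \<le>
     real (min_degree n E) * (1 - \<alpha>)\<^sup>2 /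
     ((lambda_alpha \<alpha> n E - \<alpha> * real (min_degree n E))\<^sup>2
      + real (min_degree n E) * real (n - min_degree n E) * (1 - \<alpha>)\<^sup>2)"
proof -
  define d where "d = min_degree n E"
  define m where "m = Min (x ` {..<n})"
  obtain u where u: "u < n" "degree n E u = d"
    using min_degree_attained[OF assms(4)] d_def by metis
  have m_nonneg: "0 \<le> m"
    unfolding m_def using assms(4,6) by (subst Min_ge_iff) auto
  have m_le: "\<forall>j<n. m \<le> x j"
    by (simp add: m_def)
  have "m\<^sup>2 * ((lambda_alpha \<alpha> n E - \<alpha> * d)\<^sup>2 + real d * real (n - d) * (1 - \<alpha>)\<^sup>2)
      \<le> real d * (1 - \<alpha>)\<^sup>2"
    using min_sq_le_of_weighted_subset_sum[of "{..<n}" "neighbours n E u" u m x]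
      eigenpair_A_alpha_neighbour_sum[OF assms(8) u(1)] neighbours_subset u m_nonneg m_le assms(7)
    by (simp add: card_neighbours)
  moreover have "0 < (lambda_alpha \<alpha> n E - \<alpha> * d)\<^sup>2 + real d * real (n - d) * (1 - \<alpha>)\<^sup>2"
    using degree_less_card_vertices[OF assms(3) u(1)] u assms(2,5) d_def
    by (intro add_nonneg_pos) simp_all
  ultimately show ?thesis
    unfolding m_def d_def by (simp only: pos_le_divide_eq)
qed

end
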